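(* Let $x,y\in\mathbb{Q}$ and let $\mathcal{A}$ be the Apollonian disk packing generated by a tricycle whose three disks have signed curvatures $1-y$, $x^2+y^2-y$ and $y$. Then there is a positive integer $N$ such that multiplying all curvatures of the disks of $\mathcal{A}$ by $N$ (i.e. rescaling the packing) yields an integral packing: every disk of the rescaled packing has integer curvature.
   Context: A tricycle is a triple of mutually tangent (generalized) disks (circles or lines, with signed curvatures, a line having curvature $0$ and an enclosing disk having negative curvature). A Descartes configuration is a quadruple of mutually tangent disks, with curvatures satisfying $(a+b+c+d)^2=2(a^2+b^2+c^2+d^2)$. The Apollonian disk packing generated by a tricycle is obtained by recursively completing every tricycle already constructed to a Descartes configuration. The triple $(1-y,\,x^2+y^2-y,\,y)$ is the curvature triple of the tricycle described by the tangency Pauli spinor $(1,\,x+iy)$, i.e. by the two tangency spinors $(1,0)$ and $(x,y)$ issuing from the disk of curvature $y$. *)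

theory Defs
  imports Complex_Main
begin

definition descartes :: "real \<Rightarrow> real \<Rightarrow> real \<Rightarrow> real \<Rightarrow> bool" where
  "descartes a b c d \<longleftrightarrow> (a + b + c + d)\<^sup>2 = 2 * (a\<^sup>2 + b\<^sup>2 + c\<^sup>2 + d\<^sup>2)"

text \<open>Curvature triples of the tricycles of the Apollonian packing generated by a
  tricycle with curvatures a, b, c: start from (a,b,c); every tricycle (p,q,r)
  already constructed is completed to a Descartes configuration (p,q,r,s) (every
  solution s of the Descartes relation, i.e. both completions), which produces the
  new tricycles (p,q,s), (p,r,s), (q,r,s).\<close>
inductive apollonian_tricycle :: "real \<Rightarrow> real \<Rightarrow> real \<Rightarrow> real \<times> real \<times> real \<Rightarrow> bool"
  for a b c where
  init: "apollonian_tricycle a b c (a, b, c)"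
| step1: "apollonian_tricycle a b c (p, q, r) \<Longrightarrow> descartes p q r s \<Longrightarrow>
          apollonian_tricycle a b c (p, q, s)"
| step2: "apollonian_tricycle a b c (p, q, r) \<Longrightarrow> descartes p q r s \<Longrightarrow>
          apollonian_tricycle a b c (p, r, s)"
| step3: "apollonian_tricycle a b c (p, q, r) \<Longrightarrow> descartes p q r s \<Longrightarrow>
          apollonian_tricycle a b c (q, r, s)"

definition apollonian_curvatures :: "real \<Rightarrow> real \<Rightarrow> real \<Rightarrow> real set" where
  "apollonian_curvatures a b c =
     {k. \<exists>p q r. apollonian_tricycle a b c (p, q, r) \<and> (k = p \<or> k = q \<or> k = r)}"

end

theory Submission
  imports Defs
begin

text \<open>If the tricycle \<open>(p, q, r)\<close> has integer curvatures and \<open>pq + qr + rp = m\<^sup>2\<close> with \<open>m\<close> an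
  integer, then both Descartes completions \<open>s = p + q + r \<plusminus> 2m\<close> are integers, and each new
  tricycle inherits the same property: e.g. \<open>pq + qs + sp = (p + q \<plusminus> m)\<^sup>2\<close>. Hence an integral
  tricycle generates an integral packing. The tricycle of the Pauli spinor \<open>(1, x + iy)\<close> has
  \<open>pq + qr + rp = x\<^sup>2\<close>, so scaling it by \<open>D\<^sup>2\<close>, where \<open>D\<close> clears the denominators of \<open>x\<close> and \<open>y\<close>,
  makes it integral; and scaling commutes with generating the packing.\<close>

definition integral_tricycle :: "real \<Rightarrow> real \<Rightarrow> real \<Rightarrow> bool" where
  "integral_tricycle p q r \<longleftrightarrow> p \<in> \<int> \<and> q \<in> \<int> \<and> r \<in> \<int> \<and> (\<exists>m\<in>\<int>. p*q + q*r + r*p = m\<^sup>2)"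

lemma descartes_solutions:
  assumes "descartes p q r s" and "p*q + q*r + r*p = m\<^sup>2"
  shows "s = p + q + r + 2*m \<or> s = p + q + r - 2*m"
proof -
  have "(s - (p + q + r))\<^sup>2 = (2*m)\<^sup>2"
    using assms unfolding descartes_def by (simp add: power2_eq_square algebra_simps)
  then have "s - (p + q + r) = 2*m \<or> s - (p + q + r) = -(2*m)"
    using power2_eq_iff by blast
  then show ?thesis
    by linarith
qed

lemma descartes_scale:
  assumes "descartes p q r s"
  shows "descartes (c*p) (c*q) (c*r) (c*s)"
proof -
  have "(c*p + c*q + c*r + c*s)\<^sup>2 = c\<^sup>2 * (p + q + r + s)\<^sup>2"
    by (simp add: power2_eq_square algebra_simps)
  moreover have "(c*p)\<^sup>2 + (c*q)\<^sup>2 + (c*r)\<^sup>2 + (c*s)\<^sup>2 = c\<^sup>2 * (p\<^sup>2 + q\<^sup>2 + r\<^sup>2 + s\<^sup>2)"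
    by (simp add: power2_eq_square algebra_simps)
  ultimately show ?thesis
    using assms unfolding descartes_def by simp
qed

lemma sum_products_completion:
  fixes p q r s m :: "'a::comm_ring_1"
  assumes "p*q + q*r + r*p = m\<^sup>2" and "s = p + q + r + 2*m"
  shows "p*q + q*s + s*p = (p + q + m)\<^sup>2"
proof -
  have "p*q + q*s + s*p = (p*q + q*r + r*p) + (p + q)\<^sup>2 + 2*m*(p + q)"
    using assms(2) by (simp add: power2_eq_square algebra_simps)
  then show ?thesis
    using assms(1) by (simp add: power2_eq_square algebra_simps)
qed

lemma integral_tricycle_descartes:
  assumes "integral_tricycle p q r" and "descartes p q r s"
  shows "integral_tricycle p q s \<and> integral_tricycle p r s \<and> integral_tricycle q r s"
proof -
  obtain m where ints: "p \<in> \<int>" "q \<in> \<int>" "r \<in> \<int>" "m \<in> \<int>" and m: "p*q + q*r + r*p = m\<^sup>2"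
    using assms(1) unfolding integral_tricycle_def by blast
  obtain n where n: "n \<in> \<int>" "p*q + q*r + r*p = n\<^sup>2" and s: "s = p + q + r + 2*n"
  proof (cases "s = p + q + r + 2*m")
    case True
    then show ?thesis using that ints m by blast
  next
    case False
    then have "s = p + q + r + 2*(-m)"
      using descartes_solutions[OF assms(2) m] by simp
    then show ?thesis using that[of "-m"] ints m by simp
  qed
  have "s \<in> \<int>"
    using s ints n by simp
  moreover have "p*q + q*s + s*p = (p + q + n)\<^sup>2"
    using sum_products_completion[OF n(2) s] .
  moreover have "p*r + r*s + s*p = (p + r + n)\<^sup>2"
    using sum_products_completion[of p r q n s] n(2) s by (simp add: algebra_simps)
  moreover have "q*r + r*s + s*q = (q + r + n)\<^sup>2"
    using sum_products_completion[of q r p n s] n(2) s by (simp add: algebra_simps)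
  ultimately show ?thesis
    using ints n(1) unfolding integral_tricycle_def by (metis Ints_add)
qed

lemma apollonian_tricycle_integral:
  assumes "apollonian_tricycle a b c (p, q, r)" and "integral_tricycle a b c"
  shows "integral_tricycle p q r"
  using assms
  by (induction "(p, q, r)" arbitrary: p q r rule: apollonian_tricycle.induct)
    (auto dest: integral_tricycle_descartes)

lemma apollonian_tricycle_scale:
  assumes "apollonian_tricycle a b c (p, q, r)"
  shows "apollonian_tricycle (t*a) (t*b) (t*c) (t*p, t*q, t*r)"
  using assms
  by (induction "(p, q, r)" arbitrary: p q r rule: apollonian_tricycle.induct)
    (auto intro: apollonian_tricycle.intros dest: descartes_scale)

lemma apollonian_curvatures_integral:
  assumes "integral_tricycle a b c"
  shows "apollonian_curvatures a b c \<subseteq> \<int>"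
  using apollonian_tricycle_integral[OF _ assms]
  unfolding apollonian_curvatures_def integral_tricycle_def by blast

lemma apollonian_curvatures_scale:
  assumes "k \<in> apollonian_curvatures a b c"
  shows "t*k \<in> apollonian_curvatures (t*a) (t*b) (t*c)"
  using assms apollonian_tricycle_scale
  unfolding apollonian_curvatures_def by blast

lemma Rats_common_denominator:
  assumes "x \<in> \<rat>" and "y \<in> \<rat>"
  obtains D :: nat where "D > 0" "real D * x \<in> \<int>" "real D * y \<in> \<int>"
proof -
  obtain a b where x: "x = of_int a / of_int b" and "b > 0"
    using assms(1) by (metis Rats_cases')
  obtain c d where y: "y = of_int c / of_int d" and "d > 0"
    using assms(2) by (metis Rats_cases')
  have "real (nat (b*d)) = of_int b * of_int d"
    using \<open>b > 0\<close> \<open>d > 0\<close> by simp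
  moreover have "of_int b * of_int d * x = of_int (a*d)" "of_int b * of_int d * y = of_int (c*b)"
    using x y \<open>b > 0\<close> \<open>d > 0\<close> by (simp_all add: field_simps)
  ultimately show ?thesis
    using that[of "nat (b*d)"] \<open>b > 0\<close> \<open>d > 0\<close> by (metis Ints_of_int zero_less_mult_iff zero_less_nat_eq)
qed

lemma pauli_tricycle_sum_products:
  fixes x y :: "'a::comm_ring_1"
  shows "(1 - y)*(x\<^sup>2 + y\<^sup>2 - y) + (x\<^sup>2 + y\<^sup>2 - y)*y + y*(1 - y) = x\<^sup>2"
  by (simp add: power2_eq_square algebra_simps)

lemma pauli_tricycle_scaled_integral:
  fixes x y D :: real
  assumes "D \<in> \<int>" "D*x \<in> \<int>" "D*y \<in> \<int>"
  shows "integral_tricycle (D\<^sup>2*(1 - y)) (D\<^sup>2*(x\<^sup>2 + y\<^sup>2 - y)) (D\<^sup>2*y)"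
proof -
  have "D\<^sup>2*(1 - y) = D*D - D*(D*y)" "D\<^sup>2*(x\<^sup>2 + y\<^sup>2 - y) = (D*x)\<^sup>2 + (D*y)\<^sup>2 - D*(D*y)"
    "D\<^sup>2*y = D*(D*y)"
    by (simp_all add: power2_eq_square algebra_simps)
  moreover have "D\<^sup>2*(1 - y) * (D\<^sup>2*(x\<^sup>2 + y\<^sup>2 - y)) + D\<^sup>2*(x\<^sup>2 + y\<^sup>2 - y) * (D\<^sup>2*y)
      + D\<^sup>2*y * (D\<^sup>2*(1 - y)) = (D*(D*x))\<^sup>2"
    using pauli_tricycle_sum_products[of y x] by (simp add: power2_eq_square algebra_simps)
  ultimately show ?thesis
    using assms unfolding integral_tricycle_def by (metis Ints_diff Ints_add Ints_mult Ints_power)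
qed

theorem proposition6:
  fixes x y :: real
  assumes "x \<in> \<rat>" and "y \<in> \<rat>"
  shows "\<exists>N::nat. N > 0 \<and>
    (\<forall>k \<in> apollonian_curvatures (1 - y) (x\<^sup>2 + y\<^sup>2 - y) y. real N * k \<in> \<int>)"
proof -
  obtain D :: nat where "D > 0" "real D * x \<in> \<int>" "real D * y \<in> \<int>"
    using Rats_common_denominator[OF assms] .
  then have "integral_tricycle (real (D\<^sup>2)*(1 - y)) (real (D\<^sup>2)*(x\<^sup>2 + y\<^sup>2 - y)) (real (D\<^sup>2)*y)"
    using pauli_tricycle_scaled_integral[of "real D"] by simp
  then have "real (D\<^sup>2) * k \<in> \<int>" if "k \<in> apollonian_curvatures (1 - y) (x\<^sup>2 + y\<^sup>2 - y) y" for k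
    using apollonian_curvatures_integral apollonian_curvatures_scale[OF that] by blast
  then show ?thesis
    using \<open>D > 0\<close> by (metis zero_less_power)
qed

end
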